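(* For every closed type $A$ and every semantic value $v\in[\![A]\!]$ there is a closed term $\emptyset\vdash \mathrm{reify}(v):A$ such that $[\![\mathrm{reify}(v)]\!]=v$.
   Context: Types: $A,B ::= X \mid A\to B \mid A_1\times A_2 \mid 1 \mid A_1+A_2 \mid 0$ ($X$ atomic); a closed type is one containing no atomic types. Terms: $x \mid \lambda x.t \mid t\,u \mid (t_1,t_2) \mid \pi_i t \mid () \mid \sigma_i t \mid \mathtt{match}\ t\ \mathtt{with}\ (\sigma_1 x_1\to u_1 \mid \sigma_2 x_2\to u_2) \mid \mathtt{absurd}(t)$ with standard simple typing; $\mathtt{absurd}(t):A$ for any $A$ when $t:0$. Closed types denote sets: $[\![A\to B]\!]$ = total functions $[\![A]\!]\to[\![B]\!]$, $[\![A\times B]\!]$ = cartesian product, $[\![1]\!]=\{\star\}$, $[\![A+B]\!]=\{(1,a)\mid a\in[\![A]\!]\}\uplus\{(2,b)\mid b\in[\![B]\!]\}$, $[\![0]\!]=\emptyset$. For a closed term $\emptyset\vdash t:A$, $[\![t]\!]\in[\![A]\!]$ is its standard set-theoretic interpretation. *)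

theory Defs
  imports Main "HOL-Library.FSet"
begin

datatype ty =
    TAtom nat
  | TArr ty ty
  | TProd ty ty
  | TOne
  | TSum ty ty
  | TZero

fun closed_ty :: "ty \<Rightarrow> bool" where
  "closed_ty (TAtom X) = False"
| "closed_ty (TArr A B) = (closed_ty A \<and> closed_ty B)"
| "closed_ty (TProd A B) = (closed_ty A \<and> closed_ty B)"
| "closed_ty TOne = True"
| "closed_ty (TSum A B) = (closed_ty A \<and> closed_ty B)"
| "closed_ty TZero = True"

type_synonym var = nat

datatype tm =
    Var var
  | Lam var ty tm
  | App tm tm
  | Pr tm tm
  | Proj1 tm
  | Proj2 tm
  | Unit
  | Inj1 tm
  | Inj2 tm
  | Match tm var tm var tm
  | Absurd tm

inductive typed :: "(var \<Rightarrow> ty option) \<Rightarrow> tm \<Rightarrow> ty \<Rightarrow> bool" where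
  t_var:   "\<Gamma> x = Some A \<Longrightarrow> typed \<Gamma> (Var x) A"
| t_lam:   "typed (\<Gamma>(x \<mapsto> A)) t B \<Longrightarrow> typed \<Gamma> (Lam x A t) (TArr A B)"
| t_app:   "typed \<Gamma> t (TArr A B) \<Longrightarrow> typed \<Gamma> u A \<Longrightarrow> typed \<Gamma> (App t u) B"
| t_pair:  "typed \<Gamma> t1 A1 \<Longrightarrow> typed \<Gamma> t2 A2 \<Longrightarrow> typed \<Gamma> (Pr t1 t2) (TProd A1 A2)"
| t_proj1: "typed \<Gamma> t (TProd A1 A2) \<Longrightarrow> typed \<Gamma> (Proj1 t) A1"
| t_proj2: "typed \<Gamma> t (TProd A1 A2) \<Longrightarrow> typed \<Gamma> (Proj2 t) A2"
| t_unit:  "typed \<Gamma> Unit TOne"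
| t_inj1:  "typed \<Gamma> t A1 \<Longrightarrow> typed \<Gamma> (Inj1 t) (TSum A1 A2)"
| t_inj2:  "typed \<Gamma> t A2 \<Longrightarrow> typed \<Gamma> (Inj2 t) (TSum A1 A2)"
| t_match: "typed \<Gamma> t (TSum A1 A2) \<Longrightarrow> typed (\<Gamma>(x1 \<mapsto> A1)) u1 C \<Longrightarrow>
            typed (\<Gamma>(x2 \<mapsto> A2)) u2 C \<Longrightarrow> typed \<Gamma> (Match t x1 u1 x2 u2) C"
| t_absurd: "typed \<Gamma> t TZero \<Longrightarrow> typed \<Gamma> (Absurd t) A"

section \<open>Semantic values: a universe containing the denotations of all closed types.
  A function value is represented by its (finite) graph.\<close>

datatype val =
    VStar
  | VPair val val
  | VIn1 val
  | VIn2 val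
  | VFun "(val \<times> val) fset"

fun sem :: "ty \<Rightarrow> val set" where
  "sem (TAtom X) = {}"
| "sem (TArr A B) = {VFun G | G. fset G \<subseteq> sem A \<times> sem B \<and> (\<forall>a\<in>sem A. \<exists>!b. (a, b) \<in> fset G)}"
| "sem (TProd A B) = {VPair a b | a b. a \<in> sem A \<and> b \<in> sem B}"
| "sem TOne = {VStar}"
| "sem (TSum A B) = VIn1 ` sem A \<union> VIn2 ` sem B"
| "sem TZero = {}"

definition vapp :: "val \<Rightarrow> val \<Rightarrow> val" where
  "vapp f a = (case f of VFun G \<Rightarrow> (THE b. (a, b) \<in> fset G) | _ \<Rightarrow> undefined)"

definition vfst :: "val \<Rightarrow> val" where
  "vfst p = (case p of VPair a b \<Rightarrow> a | _ \<Rightarrow> undefined)"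

definition vsnd :: "val \<Rightarrow> val" where
  "vsnd p = (case p of VPair a b \<Rightarrow> b | _ \<Rightarrow> undefined)"

primrec eval :: "(var \<Rightarrow> val) \<Rightarrow> tm \<Rightarrow> val" where
  "eval \<rho> (Var x) = \<rho> x"
| "eval \<rho> (Lam x A t) = VFun (Abs_fset ((\<lambda>a. (a, eval (\<rho>(x := a)) t)) ` sem A))"
| "eval \<rho> (App t u) = vapp (eval \<rho> t) (eval \<rho> u)"
| "eval \<rho> (Pr t u) = VPair (eval \<rho> t) (eval \<rho> u)"
| "eval \<rho> (Proj1 t) = vfst (eval \<rho> t)"
| "eval \<rho> (Proj2 t) = vsnd (eval \<rho> t)"
| "eval \<rho> Unit = VStar"
| "eval \<rho> (Inj1 t) = VIn1 (eval \<rho> t)"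
| "eval \<rho> (Inj2 t) = VIn2 (eval \<rho> t)"
| "eval \<rho> (Match t x1 u1 x2 u2) =
     (case eval \<rho> t of VIn1 a \<Rightarrow> eval (\<rho>(x1 := a)) u1
                     | VIn2 b \<Rightarrow> eval (\<rho>(x2 := b)) u2
                     | _ \<Rightarrow> undefined)"
| "eval \<rho> (Absurd t) = undefined"

text \<open>Denotation of a closed term (the environment is irrelevant for closed terms).\<close>
definition denot :: "tm \<Rightarrow> val" where
  "denot t = eval (\<lambda>_. VStar) t"

end

theory Submission
  imports Defs
begin

text \<open>Every closed type has finitely many values. By induction on closed types we show
  simultaneously that every value is denoted by a closed term and that case analysis over
  the values of a type is definable: any family of terms indexed by the values of \<open>A\<close> can
  be turned into a single term that branches on a term of type \<open>A\<close>. A function value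
  \<open>f : A \<rightarrow> B\<close> is then reified as \<open>\<lambda>x. case x of a \<Rightarrow> reify (f a)\<close>, using case analysis on
  \<open>A\<close>; case analysis on a function \<open>s : A \<rightarrow> B\<close> branches successively on the values of
  \<open>s (reify a)\<close> for the finitely many \<open>a : A\<close>, which determine \<open>s\<close>.\<close>

lemma typed_weaken: "typed \<Gamma> t C \<Longrightarrow> \<Gamma> \<subseteq>\<^sub>m \<Gamma>' \<Longrightarrow> typed \<Gamma>' t C"
proof (induction arbitrary: \<Gamma>' rule: typed.induct)
  case (t_var \<Gamma> x A)
  then show ?case by (auto intro: typed.t_var simp: map_le_def dom_def)
qed (auto intro!: typed.intros map_le_upd)

lemma eval_cong:
  "typed \<Gamma> t C \<Longrightarrow> \<forall>x\<in>dom \<Gamma>. \<rho> x = \<rho>' x \<Longrightarrow> eval \<rho> t = eval \<rho>' t"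
proof (induction arbitrary: \<rho> \<rho>' rule: typed.induct)
  case (t_lam \<Gamma> x A t B)
  have "eval (\<rho>(x := a)) t = eval (\<rho>'(x := a)) t" for a
    using t_lam by (intro t_lam.IH) auto
  then show ?case by simp
next
  case (t_match \<Gamma> t A1 A2 x1 u1 C x2 u2)
  have "eval (\<rho>(x1 := a)) u1 = eval (\<rho>'(x1 := a)) u1"
    and "eval (\<rho>(x2 := a)) u2 = eval (\<rho>'(x2 := a)) u2" for a
    using t_match by (intro t_match.IH; auto)+
  then show ?case using t_match.IH(1)[OF t_match.prems] by (simp split: val.split)
qed (simp add: domI | metis)+

lemma graph_of_fun_value:
  assumes "VFun G \<in> sem (TArr A B)"
  shows "fset G = (\<lambda>a. (a, vapp (VFun G) a)) ` sem A"
proof -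
  from assms have G: "fset G \<subseteq> sem A \<times> sem B" "\<forall>a\<in>sem A. \<exists>!b. (a, b) \<in> fset G"
    by auto
  have app: "(a, vapp (VFun G) a) \<in> fset G" if "a \<in> sem A" for a
    using theI'[OF G(2)[rule_format, OF that]] by (simp add: vapp_def)
  show ?thesis
  proof (intro equalityI subsetI)
    fix p assume p: "p \<in> fset G"
    then obtain a b where ab: "p = (a, b)" "a \<in> sem A" using G(1) by blast
    then have "b = vapp (VFun G) a" using G(2) app p by blast
    then show "p \<in> (\<lambda>a. (a, vapp (VFun G) a)) ` sem A" using ab by blast
  qed (use app in blast)
qed

lemma vapp_in_sem:
  assumes "f \<in> sem (TArr A B)" "a \<in> sem A"
  shows "vapp f a \<in> sem B"
proof -
  obtain G where G: "f = VFun G" "fset G \<subseteq> sem A \<times> sem B" using assms(1) by auto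
  then have "(a, vapp f a) \<in> fset G" using graph_of_fun_value assms by blast
  with G(2) show ?thesis by blast
qed

lemma fun_value_eq_graph:
  assumes "f \<in> sem (TArr A B)"
  shows "f = VFun (Abs_fset ((\<lambda>a. (a, vapp f a)) ` sem A))"
proof -
  obtain G where "f = VFun G" using assms by auto
  with assms show ?thesis by (metis graph_of_fun_value fset_inverse)
qed

lemma finite_sem: "closed_ty A \<Longrightarrow> finite (sem A)"
proof (induction A)
  case (TArr A B)
  then have "finite (VFun ` Abs_fset ` Pow (sem A \<times> sem B))" by simp
  moreover have "sem (TArr A B) \<subseteq> VFun ` Abs_fset ` Pow (sem A \<times> sem B)"
    by (auto intro!: image_eqI[where x="fset _"] simp: fset_inverse)
  ultimately show ?case by (rule finite_subset[rotated])
next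
  case (TProd A B)
  then have "finite (case_prod VPair ` (sem A \<times> sem B))" by simp
  moreover have "sem (TProd A B) \<subseteq> case_prod VPair ` (sem A \<times> sem B)" by auto
  ultimately show ?case by (rule finite_subset[rotated])
qed auto

lemma table_in_sem:
  assumes "distinct as" "set as = sem A" "length bs = length as" "set bs \<subseteq> sem B"
  shows "VFun (fset_of_list (zip as bs)) \<in> sem (TArr A B)"
proof -
  have "map fst (zip as bs) = as" using assms(3) by simp
  then have "(a, b) \<in> set (zip as bs) \<longleftrightarrow> map_of (zip as bs) a = Some b" for a b
    using assms(1) by (metis map_of_eq_Some_iff)
  moreover have "map_of (zip as bs) a \<noteq> None" if "a \<in> set as" for a
    using that assms(3) by (simp add: map_of_zip_is_None)
  moreover have "set (zip as bs) \<subseteq> sem A \<times> sem B"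
    using assms(2,4) by (auto dest: set_zip_leftD set_zip_rightD)
  ultimately show ?thesis using assms(2) by (auto simp: fset_of_list.rep_eq)
qed

lemma table_of_fun_value:
  assumes "set as = sem A" "f \<in> sem (TArr A B)"
  shows "VFun (fset_of_list (zip as (map (vapp f) as))) = f"
proof -
  have "fset_of_list (zip as (map (vapp f) as)) = Abs_fset ((\<lambda>a. (a, vapp f a)) ` sem A)"
    using assms(1) by (simp add: fset_of_list.abs_eq zip_map2 zip_same_conv_map image_image)
  then show ?thesis using fun_value_eq_graph[OF assms(2)] by simp
qed

lemma typed_closed: "typed Map.empty t A \<Longrightarrow> typed \<Gamma> t A"
  by (erule typed_weaken) simp

lemma eval_update_fresh:
  "typed \<Gamma> t C \<Longrightarrow> x \<notin> dom \<Gamma> \<Longrightarrow> eval (\<rho>(x := a)) t = eval \<rho> t"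
  by (erule eval_cong) auto

definition reifiable :: "ty \<Rightarrow> bool" where
  "reifiable A \<longleftrightarrow> (\<forall>v\<in>sem A. \<exists>t. typed Map.empty t A \<and> (\<forall>\<rho>. eval \<rho> t = v))"

text \<open>Any family of terms indexed by the values of \<open>A\<close> can be internalised as a single term
  branching on a term \<open>s : A\<close>. Contexts are finite so that fresh variables exist.\<close>
definition case_definable :: "ty \<Rightarrow> bool" where
  "case_definable A \<longleftrightarrow> (\<forall>\<Gamma> s C (t :: val \<Rightarrow> tm). finite (dom \<Gamma>) \<longrightarrow> typed \<Gamma> s A \<longrightarrow>
     (\<forall>a\<in>sem A. typed \<Gamma> (t a) C) \<longrightarrow>
     (\<exists>u. typed \<Gamma> u C \<and> (\<forall>\<rho>. eval \<rho> s \<in> sem A \<longrightarrow> eval \<rho> u = eval \<rho> (t (eval \<rho> s)))))"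

lemma reifiableI:
  assumes "\<And>v. v \<in> sem A \<Longrightarrow> \<exists>t. typed Map.empty t A \<and> (\<forall>\<rho>. eval \<rho> t = v)"
  shows "reifiable A"
  using assms unfolding reifiable_def by blast

lemma reifiableE:
  assumes "reifiable A"
  obtains r where "\<And>v. v \<in> sem A \<Longrightarrow> typed Map.empty (r v) A"
    and "\<And>v \<rho>. v \<in> sem A \<Longrightarrow> eval \<rho> (r v) = v"
  using assms bchoice unfolding reifiable_def by metis

lemma case_definableI:
  assumes "\<And>\<Gamma> s C t. finite (dom \<Gamma>) \<Longrightarrow> typed \<Gamma> s A \<Longrightarrow> (\<And>a. a \<in> sem A \<Longrightarrow> typed \<Gamma> (t a) C) \<Longrightarrow>
    \<exists>u. typed \<Gamma> u C \<and> (\<forall>\<rho>. eval \<rho> s \<in> sem A \<longrightarrow> eval \<rho> u = eval \<rho> (t (eval \<rho> s)))"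
  shows "case_definable A"
  using assms unfolding case_definable_def by blast

lemma case_definableE:
  assumes "case_definable A" "finite (dom \<Gamma>)" "typed \<Gamma> s A"
    and "\<And>a. a \<in> sem A \<Longrightarrow> typed \<Gamma> (t a) C"
  obtains u where "typed \<Gamma> u C"
    and "\<And>\<rho>. eval \<rho> s \<in> sem A \<Longrightarrow> eval \<rho> u = eval \<rho> (t (eval \<rho> s))"
  using assms unfolding case_definable_def by blast

lemma reifiable_TOne: "reifiable TOne"
  by (auto intro!: reifiableI typed.t_unit)

lemma case_definable_TOne: "case_definable TOne"
  by (rule case_definableI) auto

lemma reifiable_TZero: "reifiable TZero"
  by (simp add: reifiable_def)

lemma case_definable_TZero: "case_definable TZero"
  by (rule case_definableI) (auto intro: typed.t_absurd)

lemma reifiable_TSum: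
  assumes "reifiable A1" "reifiable A2"
  shows "reifiable (TSum A1 A2)"
proof (rule reifiableI)
  fix v assume "v \<in> sem (TSum A1 A2)"
  then consider a where "a \<in> sem A1" "v = VIn1 a" | a where "a \<in> sem A2" "v = VIn2 a"
    by auto
  then show "\<exists>t. typed Map.empty t (TSum A1 A2) \<and> (\<forall>\<rho>. eval \<rho> t = v)"
  proof cases
    case 1
    with assms(1) obtain t where "typed Map.empty t A1" "\<forall>\<rho>. eval \<rho> t = a"
      unfolding reifiable_def by blast
    with 1 show ?thesis by (intro exI[of _ "Inj1 t"]) (auto intro: typed.t_inj1)
  next
    case 2
    with assms(2) obtain t where "typed Map.empty t A2" "\<forall>\<rho>. eval \<rho> t = a"
      unfolding reifiable_def by blast
    with 2 show ?thesis by (intro exI[of _ "Inj2 t"]) (auto intro: typed.t_inj2)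
  qed
qed

lemma reifiable_TProd:
  assumes "reifiable A1" "reifiable A2"
  shows "reifiable (TProd A1 A2)"
proof (rule reifiableI)
  fix v assume "v \<in> sem (TProd A1 A2)"
  then obtain a b where ab: "a \<in> sem A1" "b \<in> sem A2" "v = VPair a b" by auto
  with assms obtain t1 t2 where "typed Map.empty t1 A1" "\<forall>\<rho>. eval \<rho> t1 = a"
    and "typed Map.empty t2 A2" "\<forall>\<rho>. eval \<rho> t2 = b"
    unfolding reifiable_def by meson
  with ab show "\<exists>t. typed Map.empty t (TProd A1 A2) \<and> (\<forall>\<rho>. eval \<rho> t = v)"
    by (intro exI[of _ "Pr t1 t2"]) (auto intro: typed.t_pair)
qed

lemma case_definable_TSum:
  assumes "case_definable A1" "case_definable A2"
  shows "case_definable (TSum A1 A2)"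
proof (rule case_definableI)
  fix \<Gamma> s C t
  assume fin: "finite (dom \<Gamma>)" and s: "typed \<Gamma> s (TSum A1 A2)"
    and t: "\<And>a. a \<in> sem (TSum A1 A2) \<Longrightarrow> typed \<Gamma> (t a) C"
  obtain x where x: "x \<notin> dom \<Gamma>" using ex_new_if_finite[OF infinite_UNIV_nat fin] by blast
  then have weaken: "\<Gamma> \<subseteq>\<^sub>m \<Gamma>(x \<mapsto> A)" for A by (auto simp: map_le_def)
  obtain u1 where u1: "typed (\<Gamma>(x \<mapsto> A1)) u1 C"
    "\<And>\<rho>. \<rho> x \<in> sem A1 \<Longrightarrow> eval \<rho> u1 = eval \<rho> (t (VIn1 (\<rho> x)))"
    by (rule case_definableE[OF assms(1), of "\<Gamma>(x \<mapsto> A1)" "Var x" "\<lambda>a. t (VIn1 a)"])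
      (use fin weaken in \<open>auto intro: typed.t_var typed_weaken[OF t]\<close>)
  obtain u2 where u2: "typed (\<Gamma>(x \<mapsto> A2)) u2 C"
    "\<And>\<rho>. \<rho> x \<in> sem A2 \<Longrightarrow> eval \<rho> u2 = eval \<rho> (t (VIn2 (\<rho> x)))"
    by (rule case_definableE[OF assms(2), of "\<Gamma>(x \<mapsto> A2)" "Var x" "\<lambda>a. t (VIn2 a)"])
      (use fin weaken in \<open>auto intro: typed.t_var typed_weaken[OF t]\<close>)
  have "eval \<rho> (Match s x u1 x u2) = eval \<rho> (t (eval \<rho> s))"
    if "eval \<rho> s \<in> sem (TSum A1 A2)" for \<rho>
  proof -
    have "eval (\<rho>(x := a)) (t v) = eval \<rho> (t v)" if "v \<in> sem (TSum A1 A2)" for a v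
      using eval_update_fresh[OF t[OF that] x] .
    with that show ?thesis using u1(2)[of "\<rho>(x := _)"] u2(2)[of "\<rho>(x := _)"] by auto
  qed
  moreover have "typed \<Gamma> (Match s x u1 x u2) C"
    using s u1(1) u2(1) by (rule typed.t_match)
  ultimately show "\<exists>u. typed \<Gamma> u C \<and> (\<forall>\<rho>. eval \<rho> s \<in> sem (TSum A1 A2) \<longrightarrow>
      eval \<rho> u = eval \<rho> (t (eval \<rho> s)))"
    by blast
qed

lemma case_definable_TProd:
  assumes "case_definable A1" "case_definable A2"
  shows "case_definable (TProd A1 A2)"
proof (rule case_definableI)
  fix \<Gamma> s C t
  assume fin: "finite (dom \<Gamma>)" and s: "typed \<Gamma> s (TProd A1 A2)"
    and t: "\<And>a. a \<in> sem (TProd A1 A2) \<Longrightarrow> typed \<Gamma> (t a) C"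
  have s1: "typed \<Gamma> (Proj1 s) A1" and s2: "typed \<Gamma> (Proj2 s) A2"
    using s by (auto intro: typed.t_proj1 typed.t_proj2)
  have "\<exists>u. typed \<Gamma> u C \<and> (\<forall>\<rho>. eval \<rho> (Proj2 s) \<in> sem A2 \<longrightarrow>
      eval \<rho> u = eval \<rho> (t (VPair a (eval \<rho> (Proj2 s)))))" if "a \<in> sem A1" for a
    by (rule case_definableE[OF assms(2) fin s2, of "\<lambda>b. t (VPair a b)"]) (use t that in auto)
  then obtain U where U: "\<And>a. a \<in> sem A1 \<Longrightarrow> typed \<Gamma> (U a) C"
    "\<And>a \<rho>. a \<in> sem A1 \<Longrightarrow> eval \<rho> (Proj2 s) \<in> sem A2 \<Longrightarrow>
      eval \<rho> (U a) = eval \<rho> (t (VPair a (eval \<rho> (Proj2 s))))"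
    by metis
  obtain u where "typed \<Gamma> u C"
    "\<And>\<rho>. eval \<rho> (Proj1 s) \<in> sem A1 \<Longrightarrow> eval \<rho> u = eval \<rho> (U (eval \<rho> (Proj1 s)))"
    by (rule case_definableE[OF assms(1) fin s1, where t=U]) (use U(1) in auto)
  then show "\<exists>u. typed \<Gamma> u C \<and> (\<forall>\<rho>. eval \<rho> s \<in> sem (TProd A1 A2) \<longrightarrow>
      eval \<rho> u = eval \<rho> (t (eval \<rho> s)))"
    using U(2) by (auto simp: vfst_def vsnd_def)
qed

lemma case_definable_tuple:
  assumes "case_definable B" "finite (dom \<Gamma>)" "\<And>s. s \<in> set ss \<Longrightarrow> typed \<Gamma> s B"
    and "\<And>bs. length bs = length ss \<Longrightarrow> set bs \<subseteq> sem B \<Longrightarrow> typed \<Gamma> (T bs) C"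
  shows "\<exists>u. typed \<Gamma> u C \<and>
    (\<forall>\<rho>. (\<forall>s\<in>set ss. eval \<rho> s \<in> sem B) \<longrightarrow> eval \<rho> u = eval \<rho> (T (map (eval \<rho>) ss)))"
  using assms(3,4)
proof (induction ss arbitrary: T)
  case Nil
  then show ?case by auto
next
  case (Cons s ss)
  have "\<exists>u. typed \<Gamma> u C \<and> (\<forall>\<rho>. (\<forall>s\<in>set ss. eval \<rho> s \<in> sem B) \<longrightarrow>
      eval \<rho> u = eval \<rho> (T (b # map (eval \<rho>) ss)))" if "b \<in> sem B" for b
    by (rule Cons.IH) (use Cons.prems that in auto)
  then obtain U where U: "\<And>b. b \<in> sem B \<Longrightarrow> typed \<Gamma> (U b) C"
    "\<And>b \<rho>. b \<in> sem B \<Longrightarrow> \<forall>s\<in>set ss. eval \<rho> s \<in> sem B \<Longrightarrow>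
      eval \<rho> (U b) = eval \<rho> (T (b # map (eval \<rho>) ss))"
    by metis
  obtain u where "typed \<Gamma> u C" "\<And>\<rho>. eval \<rho> s \<in> sem B \<Longrightarrow> eval \<rho> u = eval \<rho> (U (eval \<rho> s))"
    by (rule case_definableE[OF assms(1,2), of s U]) (use Cons.prems U(1) in auto)
  then show ?case using U(2) by auto
qed

lemma reifiable_TArr:
  assumes "case_definable A" "reifiable B"
  shows "reifiable (TArr A B)"
proof (rule reifiableI)
  fix f assume f: "f \<in> sem (TArr A B)"
  obtain r where r: "\<And>b. b \<in> sem B \<Longrightarrow> typed Map.empty (r b) B"
    "\<And>b \<rho>. b \<in> sem B \<Longrightarrow> eval \<rho> (r b) = b"
    using assms(2) by (metis reifiableE)
  obtain u where u: "typed [0 \<mapsto> A] u B"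
    "\<And>\<rho>. \<rho> 0 \<in> sem A \<Longrightarrow> eval \<rho> u = eval \<rho> (r (vapp f (\<rho> 0)))"
    by (rule case_definableE[OF assms(1), of "[0 \<mapsto> A]" "Var 0" "\<lambda>a. r (vapp f a)" B])
      (use r(1) vapp_in_sem[OF f] in \<open>auto intro: typed.t_var typed_closed\<close>)
  have "eval \<rho> (Lam 0 A u) = f" for \<rho>
  proof -
    have "eval (\<rho>(0 := a)) u = vapp f a" if "a \<in> sem A" for a
      using u(2)[of "\<rho>(0 := a)"] r(2) vapp_in_sem[OF f] that by simp
    then have "eval \<rho> (Lam 0 A u) = VFun (Abs_fset ((\<lambda>a. (a, vapp f a)) ` sem A))"
      by simp
    also have "\<dots> = f"
      using fun_value_eq_graph[OF f] by simp
    finally show ?thesis .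
  qed
  with u(1) show "\<exists>t. typed Map.empty t (TArr A B) \<and> (\<forall>\<rho>. eval \<rho> t = f)"
    by (blast intro: typed.t_lam)
qed

lemma case_definable_TArr:
  assumes "closed_ty A" "reifiable A" "case_definable B"
  shows "case_definable (TArr A B)"
proof (rule case_definableI)
  fix \<Gamma> s C t
  assume fin: "finite (dom \<Gamma>)" and s: "typed \<Gamma> s (TArr A B)"
    and t: "\<And>f. f \<in> sem (TArr A B) \<Longrightarrow> typed \<Gamma> (t f) C"
  obtain as where as: "distinct as" "set as = sem A"
    using finite_distinct_list[OF finite_sem[OF assms(1)]] by blast
  obtain r where r: "\<And>a. a \<in> sem A \<Longrightarrow> typed Map.empty (r a) A"
    "\<And>a \<rho>. a \<in> sem A \<Longrightarrow> eval \<rho> (r a) = a"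
    using assms(2) by (metis reifiableE)
  let ?ss = "map (\<lambda>a. App s (r a)) as"
  have ss: "typed \<Gamma> s' B" if "s' \<in> set ?ss" for s'
    using that s r(1) as(2) by (auto intro: typed.t_app typed_closed)
  have T: "typed \<Gamma> (t (VFun (fset_of_list (zip as bs)))) C"
    if "length bs = length ?ss" "set bs \<subseteq> sem B" for bs
    using that t table_in_sem[OF as] by simp
  obtain u where u: "typed \<Gamma> u C"
    "\<And>\<rho>. \<forall>s\<in>set ?ss. eval \<rho> s \<in> sem B \<Longrightarrow>
      eval \<rho> u = eval \<rho> (t (VFun (fset_of_list (zip as (map (eval \<rho>) ?ss)))))"
    using case_definable_tuple[OF assms(3) fin,
        where T="\<lambda>bs. t (VFun (fset_of_list (zip as bs)))", OF ss T] by blast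
  have "eval \<rho> u = eval \<rho> (t (eval \<rho> s))" if "eval \<rho> s \<in> sem (TArr A B)" for \<rho>
  proof -
    have args: "map (eval \<rho>) ?ss = map (vapp (eval \<rho> s)) as"
      using r(2) as(2) by simp
    have "\<forall>s'\<in>set ?ss. eval \<rho> s' \<in> sem B"
      using vapp_in_sem[OF that] r(2) as(2) by auto
    then have "eval \<rho> u = eval \<rho> (t (VFun (fset_of_list (zip as (map (eval \<rho>) ?ss)))))"
      by (rule u(2))
    also have "\<dots> = eval \<rho> (t (eval \<rho> s))"
      unfolding args table_of_fun_value[OF as(2) that] ..
    finally show ?thesis .
  qed
  with u(1) show "\<exists>u. typed \<Gamma> u C \<and> (\<forall>\<rho>. eval \<rho> s \<in> sem (TArr A B) \<longrightarrow>
      eval \<rho> u = eval \<rho> (t (eval \<rho> s)))"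
    by blast
qed

lemma closed_ty_reifiable_case_definable:
  "closed_ty A \<Longrightarrow> reifiable A \<and> case_definable A"
proof (induction A)
  case (TArr A B)
  then show ?case by (simp add: reifiable_TArr case_definable_TArr)
next
  case (TProd A B)
  then show ?case by (simp add: reifiable_TProd case_definable_TProd)
next
  case (TSum A B)
  then show ?case by (simp add: reifiable_TSum case_definable_TSum)
qed (simp_all add: reifiable_TOne case_definable_TOne reifiable_TZero case_definable_TZero)

theorem mainTheorem7:
  assumes "closed_ty A" and "v \<in> sem A"
  shows "\<exists>t. typed Map.empty t A \<and> denot t = v"
  using closed_ty_reifiable_case_definable[OF assms(1)] assms(2)
  unfolding reifiable_def denot_def by blast

end
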